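(* For every integer $m\geq 0$, $\Lambda_m\subseteq S_m$.
   Context: $\mathbb{N}=\{1,2,3,\dots\}$, $\mathbb{N}_0=\mathbb{N}\cup\{0\}$. The Collatz map $T:\mathbb{N}\to\mathbb{N}$ is $T(n)=\frac{3n+1}{2}$ if $n$ is odd and $T(n)=\frac{n}{2}$ if $n$ is even; $T^{(k)}$ denotes the $k$-fold composition. The total stopping time is $\sigma_\infty(1)=0$ and, for $n\geq 2$, $\sigma_\infty(n)=\inf\{k\in\mathbb{N}\cup\{\infty\} : T^{(k)}(n)=1\}$. Let $S_0=\{1\}$ and $S_k=\{n\in\mathbb{N}:\sigma_\infty(n)=k\}$ for $k\geq 1$. For $0\leq m\leq 3$ let $\Lambda_m=\{2^m\}$, and for $m\geq 4$ let $\Lambda_m$ be the set of all $n\in\mathbb{N}$ that can be written as $n=\frac{2^m}{3^l}-\sum_{k=1}^{l}\frac{2^{b_k}}{3^k}$ for some integers $l,b_1,\dots,b_l\in\mathbb{N}_0$ with $0\leq l\leq m-3$ and $0\leq b_1<b_2<\cdots<b_l\leq m-4$. *)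

theory Defs
  imports Complex_Main "HOL-Library.Extended_Nat"
begin

definition collatzT :: "nat \<Rightarrow> nat" where
  "collatzT n = (if odd n then (3 * n + 1) div 2 else n div 2)"

text \<open>Total stopping time: 0 at n = 1, otherwise the infimum over k \<ge> 1 with
  T^k(n) = 1, taken in the extended naturals (infimum of the empty set is \<infinity>).\<close>
definition sigma_inf :: "nat \<Rightarrow> enat" where
  "sigma_inf n = (if n = 1 then 0
     else (INF k \<in> {k::nat. 1 \<le> k \<and> (collatzT ^^ k) n = 1}. enat k))"

definition S :: "nat \<Rightarrow> nat set" where
  "S k = (if k = 0 then {1} else {n. 1 \<le> n \<and> sigma_inf n = enat k})"

definition Lambda :: "nat \<Rightarrow> nat set" where
  "Lambda m = (if m \<le> 3 then {2 ^ m} else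
     {n. 1 \<le> n \<and> (\<exists>(l::nat) (b::nat \<Rightarrow> nat). l \<le> m - 3 \<and>
          (\<forall>k. 1 \<le> k \<and> k < l \<longrightarrow> b k < b (k + 1)) \<and>
          (\<forall>k. 1 \<le> k \<and> k \<le> l \<longrightarrow> b k \<le> m - 4) \<and>
          (real n = 2 ^ m / 3 ^ l - (\<Sum>k = 1..l. 2 ^ (b k) / 3 ^ k)))})"

end

theory Submission
  imports Defs
begin

text \<open>Multiplying by \<open>3\<^sup>l\<close>, \<open>n \<in> \<Lambda>\<^sub>m\<close> means \<open>3\<^sup>l n + \<Sum>\<^sub>k 2\<^bsup>b\<^sub>k\<^esup> 3\<^bsup>l-k\<^esup> = 2\<^sup>m\<close>. If \<open>b\<^sub>1 = 0\<close>, the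
  identity forces \<open>n\<close> odd, and \<open>T n = (3n+1)/2\<close> satisfies the same identity for \<open>m - 1\<close> with
  exponents \<open>b\<^sub>2 - 1 < \<dots> < b\<^sub>l - 1\<close>; otherwise all \<open>b\<^sub>k \<ge> 1\<close>, \<open>n\<close> is even and \<open>T n = n/2\<close>
  satisfies it with exponents \<open>b\<^sub>k - 1\<close>. So each Collatz step lowers \<open>m\<close> by one, and after
  \<open>m\<close> steps one reaches \<open>\<Lambda>\<^sub>0 = {1}\<close>; the orbit cannot pass through 1 earlier.\<close>

fun weight :: "nat list \<Rightarrow> nat" where
  "weight [] = 0"
| "weight (b # bs) = 2 ^ b * 3 ^ length bs + weight bs"

lemma weight_append_single: "weight (bs @ [b]) = 3 * weight bs + 2 ^ b"
  by (induction bs) auto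

lemma weight_map_Suc: "weight (map Suc bs) = 2 * weight bs"
  by (induction bs) auto

lemma weight_map_upt:
  "weight (map b [1..<Suc l]) = (\<Sum>k = 1..l. 2 ^ b k * 3 ^ (l - k))"
proof (induction l)
  case 0
  then show ?case by simp
next
  case (Suc l)
  have "(\<Sum>k = 1..l. 2 ^ b k * 3 ^ (Suc l - k)) = 3 * (\<Sum>k = 1..l. (2::nat) ^ b k * 3 ^ (l - k))"
    by (simp add: sum_distrib_left Suc_diff_le mult.left_commute)
  with Suc.IH show ?case
    by (simp add: weight_append_single)
qed

lemma weight_map_upt_real:
  "real (weight (map b [1..<Suc l])) = 3 ^ l * (\<Sum>k = 1..l. 2 ^ b k / 3 ^ k)"
  unfolding weight_map_upt of_nat_sum sum_distrib_left
proof (rule sum.cong)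
  fix k assume "k \<in> {1..l}"
  then have "(3::real) ^ l = 3 ^ k * 3 ^ (l - k)"
    by (simp flip: power_add)
  then show "real (2 ^ b k * 3 ^ (l - k)) = 3 ^ l * (2 ^ b k / 3 ^ k)"
    by simp
qed simp

lemma sorted_wrt_less_map_upt:
  assumes "\<forall>k. 1 \<le> k \<and> k < l \<longrightarrow> b k < (b (k + 1) :: nat)"
  shows "sorted_wrt (<) (map b [1..<Suc l])"
proof (subst sorted_wrt_iff_nth_Suc_transp)
  show "transp ((<) :: nat \<Rightarrow> _)"
    by (rule transp_on_less)
  show "\<forall>i. Suc i < length (map b [1..<Suc l]) \<longrightarrow> map b [1..<Suc l] ! i < map b [1..<Suc l] ! Suc i"
    using assms by (simp del: upt_Suc)
qed

lemma sorted_wrt_less_split_zero: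
  assumes "sorted_wrt (<) (bs :: nat list)"
  obtains cs where "sorted_wrt (<) cs" and "bs = map Suc cs \<or> bs = 0 # map Suc cs"
proof -
  have shift: "sorted_wrt (<) (map (\<lambda>b. b - 1) ds) \<and> ds = map Suc (map (\<lambda>b. b - 1) ds)"
    if "sorted_wrt (<) ds" "\<forall>d \<in> set ds. 0 < d" for ds :: "nat list"
  proof
    show "sorted_wrt (<) (map (\<lambda>b. b - 1) ds)"
      unfolding sorted_wrt_map by (rule sorted_wrt_mono_rel[OF _ that(1)]) (use that(2) in auto)
    show "ds = map Suc (map (\<lambda>b. b - 1) ds)"
      using that by (simp add: map_idI)
  qed
  show ?thesis
  proof (cases "bs = [] \<or> hd bs \<noteq> 0")
    case True
    with assms have "\<forall>d \<in> set bs. 0 < d"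
      by (cases bs) auto
    with shift assms that show ?thesis by blast
  next
    case False
    then obtain ds where bs: "bs = 0 # ds"
      by (cases bs) auto
    with assms have "sorted_wrt (<) ds" "\<forall>d \<in> set ds. 0 < d"
      by auto
    with shift bs that show ?thesis by metis
  qed
qed

lemma halve_three_pow_identity:
  fixes x w y :: nat
  assumes "3 ^ l * x + 2 * w = 2 * y"
  shows "even x" and "3 ^ l * (x div 2) + w = y"
proof -
  have "even (3 ^ l * x)"
    using arg_cong[OF assms, of even] by simp
  then show "even x"
    by simp
  then obtain k where "x = 2 * k" ..
  with assms show "3 ^ l * (x div 2) + w = y"
    by simp
qed

text \<open>Dropping the bound \<open>l \<le> m - 3\<close> and positivity gives a superset that is
  mapped into itself by the Collatz map and is \<open>{2\<^sup>m}\<close> for \<open>m \<le> 3\<close>, so small \<open>m\<close> need no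
  separate treatment.\<close>
definition Lambda_list :: "nat \<Rightarrow> nat set" where
  "Lambda_list m = {n. \<exists>bs. sorted_wrt (<) bs \<and> (\<forall>b \<in> set bs. b + 4 \<le> m) \<and>
                          3 ^ length bs * n + weight bs = 2 ^ m}"

lemma Lambda_list_le_3: "m \<le> 3 \<Longrightarrow> Lambda_list m = {2 ^ m}"
proof -
  assume "m \<le> 3"
  then have "(\<forall>b \<in> set bs. b + 4 \<le> m) \<longleftrightarrow> bs = []" for bs :: "nat list"
    by (cases bs) auto
  then show ?thesis
    by (auto simp: Lambda_list_def)
qed

lemma Lambda_subset_Lambda_list: "Lambda m \<subseteq> Lambda_list m"
proof (cases "m \<le> 3")
  case True
  then show ?thesis
    by (simp add: Lambda_def Lambda_list_le_3)
next
  case False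
  show ?thesis
  proof
    fix n assume "n \<in> Lambda m"
    then obtain l b where incr: "\<forall>k. 1 \<le> k \<and> k < l \<longrightarrow> b k < b (k + 1)"
      and bound: "\<forall>k. 1 \<le> k \<and> k \<le> l \<longrightarrow> b k \<le> m - 4"
      and eq: "real n = 2 ^ m / 3 ^ l - (\<Sum>k = 1..l. 2 ^ b k / 3 ^ k)"
      using False by (auto simp: Lambda_def)
    define bs where "bs = map b [1..<Suc l]"
    have "3 ^ l * real n + 3 ^ l * (\<Sum>k = 1..l. 2 ^ b k / 3 ^ k) = 2 ^ m"
      unfolding eq by (simp add: right_diff_distrib)
    then have "real (3 ^ length bs * n + weight bs) = real (2 ^ m)"
      using weight_map_upt_real[of b l] by (simp add: bs_def del: upt_Suc)
    then have "3 ^ length bs * n + weight bs = 2 ^ m"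
      by (simp only: of_nat_eq_iff)
    moreover have "\<forall>c \<in> set bs. c + 4 \<le> m"
      using bound False by (auto simp: bs_def)
    moreover have "sorted_wrt (<) bs"
      unfolding bs_def using incr by (rule sorted_wrt_less_map_upt)
    ultimately show "n \<in> Lambda_list m"
      unfolding Lambda_list_def by blast
  qed
qed

lemma collatzT_Lambda_list:
  assumes "n \<in> Lambda_list (Suc m)"
  shows "collatzT n \<in> Lambda_list m"
proof -
  obtain bs where sorted: "sorted_wrt (<) bs" and bound: "\<forall>b \<in> set bs. b + 4 \<le> Suc m"
    and eq: "3 ^ length bs * n + weight bs = 2 * 2 ^ m"
    using assms by (auto simp: Lambda_list_def)
  obtain cs where cs: "sorted_wrt (<) cs" and split: "bs = map Suc cs \<or> bs = 0 # map Suc cs"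
    using sorted_wrt_less_split_zero[OF sorted] .
  have cs_bound: "\<forall>c \<in> set cs. c + 4 \<le> m"
    using bound split by force
  have "3 ^ length cs * collatzT n + weight cs = 2 ^ m"
    using split
  proof
    assume "bs = map Suc cs"
    with eq have "3 ^ length cs * n + 2 * weight cs = 2 * 2 ^ m"
      by (simp add: weight_map_Suc)
    from halve_three_pow_identity[OF this] show ?thesis
      by (simp add: collatzT_def)
  next
    assume "bs = 0 # map Suc cs"
    with eq have "3 ^ length cs * (3 * n + 1) + 2 * weight cs = 2 * 2 ^ m"
      by (simp add: weight_map_Suc algebra_simps)
    from halve_three_pow_identity[OF this] show ?thesis
      by (simp add: collatzT_def)
  qed
  with cs cs_bound show ?thesis
    by (auto simp: Lambda_list_def)
qed

definition first_hits_one :: "nat \<Rightarrow> nat \<Rightarrow> bool" where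
  "first_hits_one n m \<longleftrightarrow> (collatzT ^^ m) n = 1 \<and> (\<forall>j < m. (collatzT ^^ j) n \<noteq> 1)"

lemma first_hits_one_Suc:
  assumes "first_hits_one (collatzT n) m" and "n \<noteq> 1"
  shows "first_hits_one n (Suc m)"
proof -
  have shift: "(collatzT ^^ Suc j) n = (collatzT ^^ j) (collatzT n)" for j
    by (simp add: funpow_Suc_right del: funpow.simps)
  have "(collatzT ^^ j) n \<noteq> 1" if "j < Suc m" for j
    using assms that shift by (cases j) (auto simp: first_hits_one_def)
  with assms shift show ?thesis
    by (simp add: first_hits_one_def)
qed

lemma sigma_inf_first_hits_one:
  assumes "first_hits_one n m" and "1 \<le> m"
  shows "sigma_inf n = enat m"
proof -
  have hit: "(collatzT ^^ m) n = 1" and before: "\<forall>j < m. (collatzT ^^ j) n \<noteq> 1"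
    using assms(1) by (auto simp: first_hits_one_def)
  have "n \<noteq> 1"
    using before assms(2) by (metis funpow_0 less_le_trans zero_less_one)
  moreover have "(INF k \<in> {k. 1 \<le> k \<and> (collatzT ^^ k) n = 1}. enat k) = enat m"
    using hit before assms(2)
    by (intro antisym INF_lower INF_greatest) (auto simp: not_less[symmetric])
  ultimately show ?thesis
    by (simp add: sigma_inf_def)
qed

lemma Lambda_list_first_hits_one: "n \<in> Lambda_list m \<Longrightarrow> first_hits_one n m"
proof (induction m arbitrary: n)
  case 0
  then show ?case
    by (simp add: Lambda_list_le_3 first_hits_one_def)
next
  case (Suc m)
  have IH: "first_hits_one (collatzT n) m"
    using Suc collatzT_Lambda_list by blast
  have "n \<noteq> 1"
  proof
    \<comment> \<open>the orbit of 1 is 1, 2, 1, \<dots>, which would force \<open>n \<in> Lambda_list 2 = {4}\<close>\<close>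
    assume "n = 1"
    then have "first_hits_one 2 m"
      using IH by (simp add: collatzT_def)
    then have "(collatzT ^^ m) 2 = 1" and "\<not> 1 < m"
      by (auto simp: first_hits_one_def collatzT_def dest: spec[of _ 1])
    then have "m = 1"
      by (cases m) auto
    with \<open>n = 1\<close> Suc.prems show False
      by (simp add: Lambda_list_le_3)
  qed
  with IH show ?case
    by (rule first_hits_one_Suc)
qed

theorem mainTheorem2:
  fixes m :: nat
  shows "Lambda m \<subseteq> S m"
proof
  fix n assume n: "n \<in> Lambda m"
  show "n \<in> S m"
  proof (cases "m = 0")
    case True
    with n show ?thesis
      by (simp add: Lambda_def S_def)
  next
    case False
    have "1 \<le> n"
      using n by (auto simp: Lambda_def split: if_splits)
    moreover have "first_hits_one n m"
      using n Lambda_subset_Lambda_list by (blast intro: Lambda_list_first_hits_one)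
    then have "sigma_inf n = enat m"
      using False by (simp add: sigma_inf_first_hits_one)
    ultimately show ?thesis
      using False by (simp add: S_def)
  qed
qed

end
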